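(* Let $\sigma>0$, $\alpha>0$, and set $\eta=\sqrt{\alpha+1}$. Define $p(t)=(\alpha+1)\log(\sigma\eta+t)$ for $t\ge0$, and for $\hat\beta\in\mathbb{R}$ let $$\tilde\beta(\hat\beta)=\arg\min_{\beta\in\mathbb{R}}\left\{\tfrac12(\hat\beta-\beta)^2+\sigma^{2}p(|\beta|)\right\}.$$ Then for every $\hat\beta\in\mathbb{R}$ this minimizer is unique, and the estimator $\hat\beta\mapsto\tilde\beta(\hat\beta)$ is a continuous function of $\hat\beta$ on $\mathbb{R}$.
   Context: This penalty is the part of $-\log\pi(\beta\mid\sigma)$ depending on $\beta$ under the generalized double Pareto prior $\mathrm{GDP}(\xi=\sigma\eta/\alpha,\alpha)$ with density $\frac{1}{2\xi}(1+|\beta|/(\alpha\xi))^{-(\alpha+1)}$; the problem corresponds to one coordinate of penalized least squares with orthonormal design, $\hat\beta=\mathbf{x}_j'\mathbf{y}$. *)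

theory Defs
  imports "HOL-Analysis.Analysis"
begin

definition gdp_pen :: "real \<Rightarrow> real \<Rightarrow> real \<Rightarrow> real" where
  "gdp_pen \<sigma> \<alpha> t = (\<alpha> + 1) * ln (\<sigma> * sqrt (\<alpha> + 1) + t)"

definition gdp_obj :: "real \<Rightarrow> real \<Rightarrow> real \<Rightarrow> real \<Rightarrow> real" where
  "gdp_obj \<sigma> \<alpha> bh b = (1/2) * (bh - b)^2 + \<sigma>^2 * gdp_pen \<sigma> \<alpha> \<bar>b\<bar>"

definition gdp_est :: "real \<Rightarrow> real \<Rightarrow> real \<Rightarrow> real" where
  "gdp_est \<sigma> \<alpha> bh = (THE b. is_arg_min (gdp_obj \<sigma> \<alpha> bh) (\<lambda>_. True) b)"

end

theory Submission
  imports Defs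
begin

text \<open>Write \<open>c = \<sigma> \<eta>\<close>; since \<open>\<sigma>\<^sup>2(\<alpha>+1) = c\<^sup>2\<close>, the objective is
  \<open>(\<beta>\<^sub>h - b)\<^sup>2/2 + c\<^sup>2 ln (c + \<bar>b\<bar>)\<close>. For \<open>b > 0\<close> its derivative is
  \<open>q(b)/(c + b)\<close> with \<open>q(b) = b\<^sup>2 + (c - \<beta>\<^sub>h) b + c\<^sup>2 - \<beta>\<^sub>h c\<close>. If \<open>\<beta>\<^sub>h \<le> c\<close>, then
  \<open>q > 0\<close> on \<open>b > 0\<close>; otherwise the roots of \<open>q\<close> have negative product, so \<open>q\<close>
  changes sign exactly once on the half-line, at its larger root. Hence on \<open>b \<ge> 0\<close> the
  objective has a strict minimum at the positive part of the larger root, and comparing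
  \<open>b\<close> with \<open>-b\<close> shows that the global minimizer has the sign of \<open>\<beta>\<^sub>h\<close>. The result is
  an explicit closed form built from \<open>sqrt\<close> and \<open>max\<close>, hence continuous.\<close>

lemma strict_min_at_derivative_sign_change:
  fixes f f' :: "real \<Rightarrow> real"
  assumes "a \<le> h" and cont: "continuous_on {a..} f"
    and deriv: "\<And>x. a < x \<Longrightarrow> (f has_real_derivative f' x) (at x)"
    and dec: "\<And>x. a < x \<Longrightarrow> x < h \<Longrightarrow> f' x < 0"
    and inc: "\<And>x. h < x \<Longrightarrow> 0 < f' x"
    and x: "a \<le> x" "x \<noteq> h"
  shows "f h < f x"
proof (cases "x < h")
  case True
  show ?thesis
  proof (rule DERIV_neg_imp_decreasing_open[OF True])
    show "\<exists>d. (f has_real_derivative d) (at y) \<and> d < 0" if "x < y" "y < h" for y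
      using deriv[of y] dec[of y] that x by force
    show "continuous_on {x..h} f" using cont by (rule continuous_on_subset) (use x in auto)
  qed
next
  case False
  then have "h < x" using x by simp
  then show ?thesis
  proof (rule DERIV_pos_imp_increasing_open)
    show "\<exists>d. (f has_real_derivative d) (at y) \<and> 0 < d" if "h < y" "y < x" for y
      using deriv[of y] inc[of y] that \<open>a \<le> h\<close> by force
    show "continuous_on {h..x} f" using cont by (rule continuous_on_subset) (use \<open>a \<le> h\<close> in auto)
  qed
qed

definition log_pen_obj :: "real \<Rightarrow> real \<Rightarrow> real \<Rightarrow> real" where
  "log_pen_obj c bh b = (1/2) * (bh - b)^2 + c^2 * ln (c + \<bar>b\<bar>)"

text \<open>The positive part of the larger root of \<open>q\<close>; the inner \<open>max\<close> only guards the
  square root where \<open>q\<close> has no real roots, in which case the result is \<open>0\<close> anyway.\<close>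
definition log_pen_shrink :: "real \<Rightarrow> real \<Rightarrow> real" where
  "log_pen_shrink c x = max 0 ((x - c + sqrt (max 0 ((x + c)^2 - 4 * c^2))) / 2)"

definition log_pen_rule :: "real \<Rightarrow> real \<Rightarrow> real" where
  "log_pen_rule c x = log_pen_shrink c x - log_pen_shrink c (- x)"

lemma log_pen_shrink_nonneg: "0 \<le> log_pen_shrink c x"
  by (simp add: log_pen_shrink_def)

lemma log_pen_shrink_eq_0:
  assumes "0 < c" "x \<le> c"
  shows "log_pen_shrink c x = 0"
proof (cases "(x + c)^2 - 4 * c^2 \<le> 0")
  case True
  then show ?thesis using assms by (simp add: log_pen_shrink_def)
next
  case False
  then have "(2 * c)^2 < (x + c)^2" by (simp add: power_mult_distrib)
  then have "2 * c < \<bar>x + c\<bar>"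
    using assms by (metis abs_le_square_iff abs_of_pos mult_pos_pos zero_less_numeral not_le)
  then have neg: "x + c < - 2 * c" using assms by auto
  have "sqrt ((x + c)^2 - 4 * c^2) \<le> sqrt ((x + c)^2)" by (rule real_sqrt_le_mono) simp
  also have "\<dots> = - (x + c)" using neg assms by (simp add: abs_if)
  finally show ?thesis using False assms by (simp add: log_pen_shrink_def)
qed

lemma log_pen_shrink_gt:
  assumes "0 < c" "c < x"
  obtains s where "s^2 = (x + c)^2 - 4 * c^2" "x - c < s"
    and "log_pen_shrink c x = (x - c + s) / 2"
proof
  define s where "s = sqrt ((x + c)^2 - 4 * c^2)"
  have disc: "(x - c)^2 < (x + c)^2 - 4 * c^2"
    using assms by (simp add: power2_eq_square algebra_simps)
  moreover have "0 \<le> (x - c)^2" by simp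
  ultimately have disc_pos: "4 * c^2 \<le> (x + c)^2" by linarith
  then show "s^2 = (x + c)^2 - 4 * c^2" unfolding s_def by simp
  have "sqrt ((x - c)^2) < s" unfolding s_def using disc by (simp only: real_sqrt_less_iff)
  then show gt: "x - c < s" using assms by simp
  show "log_pen_shrink c x = (x - c + s) / 2"
    using disc_pos gt assms by (simp add: log_pen_shrink_def s_def)
qed

lemma log_pen_derivative_numerator_sign:
  assumes c: "0 < c" and bh: "0 \<le> bh" and x: "0 \<le> x"
  defines "q \<equiv> x^2 + (c - bh) * x + c^2 - bh * c"
  shows "log_pen_shrink c bh < x \<Longrightarrow> 0 < q"
    and "x < log_pen_shrink c bh \<Longrightarrow> q < 0"
proof -
  have "(log_pen_shrink c bh < x \<longrightarrow> 0 < q) \<and> (x < log_pen_shrink c bh \<longrightarrow> q < 0)"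
  proof (cases "bh \<le> c")
    case True
    have "q = x^2 + (c - bh) * (x + c)" by (simp add: q_def power2_eq_square algebra_simps)
    moreover have "0 \<le> (c - bh) * (x + c)" using True x c by simp
    ultimately have "0 < x \<Longrightarrow> 0 < q" by (smt (verit) zero_less_power)
    then show ?thesis using log_pen_shrink_eq_0[OF c True] x by auto
  next
    case False
    then obtain s where s: "s^2 = (bh + c)^2 - 4 * c^2" "bh - c < s"
      and h: "log_pen_shrink c bh = (bh - c + s) / 2"
      using log_pen_shrink_gt[OF c] by (metis not_le)
    have "q = (x - log_pen_shrink c bh) * (x + (s - bh + c) / 2)"
      unfolding q_def using s(1) h by algebra
    moreover have "0 < x + (s - bh + c) / 2" using s(2) x by (simp add: field_simps)
    ultimately show ?thesis by (simp add: mult_neg_pos)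
  qed
  then show "log_pen_shrink c bh < x \<Longrightarrow> 0 < q" "x < log_pen_shrink c bh \<Longrightarrow> q < 0"
    by auto
qed

lemma log_pen_half_line_has_derivative:
  assumes "0 < c + x"
  shows "((\<lambda>x. (1/2) * (bh - x)^2 + c^2 * ln (c + x)) has_real_derivative
          (x^2 + (c - bh) * x + c^2 - bh * c) / (c + x)) (at x)"
proof -
  have "((\<lambda>x. (1/2) * (bh - x)^2 + c^2 * ln (c + x)) has_real_derivative
          (1/2) * (2 * (bh - x) * (-1)) + c^2 * (1 / (c + x))) (at x)"
    using assms by (auto intro!: derivative_eq_intros)
  moreover have "(1/2) * (2 * (bh - x) * (-1)) + c^2 * (1 / (c + x))
      = (x^2 + (c - bh) * x + c^2 - bh * c) / (c + x)"
    using assms by (simp add: field_simps power2_eq_square)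
  ultimately show ?thesis by simp
qed

lemma log_pen_obj_strict_min_half_line:
  assumes c: "0 < c" and bh: "0 \<le> bh" and x: "0 \<le> x" "x \<noteq> log_pen_shrink c bh"
  shows "log_pen_obj c bh (log_pen_shrink c bh) < log_pen_obj c bh x"
proof -
  define f where "f x = (1/2) * (bh - x)^2 + c^2 * ln (c + x)" for x
  have "f (log_pen_shrink c bh) < f x"
  proof (rule strict_min_at_derivative_sign_change[OF log_pen_shrink_nonneg _ _ _ _ x])
    show "continuous_on {0..} f"
      unfolding f_def using c by (intro continuous_intros) auto
    show "(f has_real_derivative (y^2 + (c - bh) * y + c^2 - bh * c) / (c + y)) (at y)"
      if "0 < y" for y
      unfolding f_def using c that by (intro log_pen_half_line_has_derivative) simp
    show "(y^2 + (c - bh) * y + c^2 - bh * c) / (c + y) < 0"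
      if "0 < y" "y < log_pen_shrink c bh" for y
      using log_pen_derivative_numerator_sign(2)[OF c bh, of y] that c by (simp add: divide_neg_pos)
    show "0 < (y^2 + (c - bh) * y + c^2 - bh * c) / (c + y)"
      if "log_pen_shrink c bh < y" for y
      using log_pen_derivative_numerator_sign(1)[OF c bh, of y] that c log_pen_shrink_nonneg[of c bh]
      by simp
  qed
  then show ?thesis using x log_pen_shrink_nonneg[of c bh] by (simp add: f_def log_pen_obj_def)
qed

lemma log_pen_obj_reflect: "log_pen_obj c bh b = log_pen_obj c bh (- b) - 2 * bh * b"
  by (simp add: log_pen_obj_def power2_eq_square algebra_simps)

lemma log_pen_obj_odd: "log_pen_obj c (- bh) (- b) = log_pen_obj c bh b"
  by (simp add: log_pen_obj_def power2_commute)

text \<open>For \<open>b < 0\<close>, \<open>-b\<close> is at least as good as \<open>b\<close>, strictly unless \<open>bh = 0\<close>; and if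
  \<open>-b\<close> is the half-line minimizer then \<open>bh > c > 0\<close>.\<close>
lemma log_pen_obj_strict_min_nonneg_bh:
  assumes c: "0 < c" and bh: "0 \<le> bh" and b: "b \<noteq> log_pen_shrink c bh"
  shows "log_pen_obj c bh (log_pen_shrink c bh) < log_pen_obj c bh b"
proof (cases "0 \<le> b")
  case True
  then show ?thesis by (rule log_pen_obj_strict_min_half_line[OF c bh _ b])
next
  case False
  have reflect: "log_pen_obj c bh (- b) \<le> log_pen_obj c bh b"
    using log_pen_obj_reflect[of c bh b] False bh by (simp add: mult_nonneg_nonpos)
  show ?thesis
  proof (cases "- b = log_pen_shrink c bh")
    case True
    then have "0 < log_pen_shrink c bh" using False by simp
    then have "0 < bh" using log_pen_shrink_eq_0[OF c, of bh] c by fastforce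
    then have "log_pen_obj c bh (- b) < log_pen_obj c bh b"
      using log_pen_obj_reflect[of c bh b] False by (simp add: mult_pos_neg)
    then show ?thesis using True by simp
  next
    case False
    then show ?thesis
      using log_pen_obj_strict_min_half_line[OF c bh _ False] \<open>\<not> 0 \<le> b\<close> reflect by simp
  qed
qed

lemma log_pen_obj_strict_min:
  assumes c: "0 < c" and b: "b \<noteq> log_pen_rule c bh"
  shows "log_pen_obj c bh (log_pen_rule c bh) < log_pen_obj c bh b"
proof (cases "0 \<le> bh")
  case True
  then have "log_pen_rule c bh = log_pen_shrink c bh"
    using log_pen_shrink_eq_0[OF c, of "- bh"] c by (simp add: log_pen_rule_def)
  then show ?thesis using log_pen_obj_strict_min_nonneg_bh[OF c True] b by simp
next
  case False
  then have rule: "log_pen_rule c bh = - log_pen_shrink c (- bh)"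
    using log_pen_shrink_eq_0[OF c, of bh] c by (simp add: log_pen_rule_def)
  have "log_pen_obj c (- bh) (log_pen_shrink c (- bh)) < log_pen_obj c (- bh) (- b)"
    using log_pen_obj_strict_min_nonneg_bh[OF c, of "- bh" "- b"] False b rule by auto
  then show ?thesis using rule log_pen_obj_odd[of c bh] by (metis minus_minus)
qed

lemma continuous_log_pen_rule: "continuous_on UNIV (log_pen_rule c)"
  unfolding log_pen_rule_def[abs_def] log_pen_shrink_def by (intro continuous_intros) auto

theorem proposition4:
  fixes \<sigma> \<alpha> :: real
  assumes "\<sigma> > 0" and "\<alpha> > 0"
  shows "(\<forall>bh. \<exists>!b. is_arg_min (gdp_obj \<sigma> \<alpha> bh) (\<lambda>_. True) b)
         \<and> continuous_on UNIV (gdp_est \<sigma> \<alpha>)"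
proof -
  define c where "c = \<sigma> * sqrt (\<alpha> + 1)"
  have c: "0 < c" using assms by (simp add: c_def)
  have "\<sigma>^2 * (\<alpha> + 1) = c^2" using assms by (simp add: c_def power_mult_distrib)
  then have obj: "gdp_obj \<sigma> \<alpha> = log_pen_obj c"
    by (intro ext) (simp add: gdp_obj_def gdp_pen_def log_pen_obj_def c_def[symmetric])
  have arg_min: "is_arg_min (gdp_obj \<sigma> \<alpha> bh) (\<lambda>_. True) b \<longleftrightarrow> b = log_pen_rule c bh"
    for bh b
    unfolding obj is_arg_min_def using log_pen_obj_strict_min[OF c] by (metis less_asym)
  then have "gdp_est \<sigma> \<alpha> = log_pen_rule c"
    by (intro ext) (simp add: gdp_est_def)
  then show ?thesis using arg_min continuous_log_pen_rule by auto
qed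

end
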